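(* Let $F$ be a global function field with full constant field $\mathbb{F}_q$ and rational places $P_1,\dots,P_n$; fix $m\ge1$. Let $r\ge t\ge0$ and $j_1,\dots,j_m\ge0$ be integers with $mn-(j_1+2j_2+\cdots+mj_m)\le t\le(m+1)n-(2j_1+\cdots+(m+1)j_m)$, and put $w=j_1+2j_2+\cdots+mj_m$. Then $$|\mathcal{U}(r,t;j_1,\dots,j_m)|=\binom{n}{j_m}\binom{n-j_m}{j_{m-1}}\cdots\binom{n-(j_2+\cdots+j_m)}{j_1}\binom{n-(j_1+\cdots+j_m)}{t-mn+w}\,C_{r-mn+w,\;t-mn+w}.$$
   Context: For a positive divisor $D$: $\overline D=\sum_{i=1}^n\min(m+1,v_{P_i}(D))P_i$, $j_\ell(D)=|\{i:v_{P_i}(D)=m-\ell\}|$. $\mathcal{U}(r,t;j_1,\dots,j_m)$ is the set of positive divisors $D$ with $\deg D=r$, $\deg\overline D=t$, $j_\ell(D)=j_\ell$ ($1\le\ell\le m$). For integers $a\ge b\ge0$ with $b\le n$, $C_{a,b}$ is the number of positive divisors $D$ of $F$ of degree $a$ with ${\rm supp}(\overline D)=\{Q_1,\dots,Q_b\}$ (i.e. $v_{Q_k}(D)\ge1$ for all $k$ and $v_P(D)=0$ for all other rational places $P$), for a fixed set $\{Q_1,\dots,Q_b\}$ of $b$ rational places; this number depends only on $b$, not on the chosen set. *)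

theory Defs
  imports Main
begin

(* Abstract model of the places of a global function field F:
   places have type 'p, each place p has a degree deg p >= 1,
   P i (1 <= i <= n) are the rational places (the places of degree 1).
   A divisor is an integer valued function on places with finite support. *)

definition positive_divisor :: "('p \<Rightarrow> int) \<Rightarrow> bool" where
  "positive_divisor D \<longleftrightarrow> (\<forall>p. D p \<ge> 0) \<and> finite {p. D p \<noteq> 0}"

definition div_deg :: "('p \<Rightarrow> nat) \<Rightarrow> ('p \<Rightarrow> int) \<Rightarrow> int" where
  "div_deg deg D = (\<Sum>p\<in>{p. D p \<noteq> 0}. D p * int (deg p))"

definition div_bar :: "(nat \<Rightarrow> 'p) \<Rightarrow> nat \<Rightarrow> nat \<Rightarrow> ('p \<Rightarrow> int) \<Rightarrow> ('p \<Rightarrow> int)" where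
  "div_bar P n m D = (\<lambda>p. if p \<in> P ` {1..n} then min (int m + 1) (D p) else 0)"

definition jcount :: "(nat \<Rightarrow> 'p) \<Rightarrow> nat \<Rightarrow> nat \<Rightarrow> ('p \<Rightarrow> int) \<Rightarrow> nat \<Rightarrow> nat" where
  "jcount P n m D l = card {i\<in>{1..n}. D (P i) = int m - int l}"

definition U_set :: "('p \<Rightarrow> nat) \<Rightarrow> (nat \<Rightarrow> 'p) \<Rightarrow> nat \<Rightarrow> nat \<Rightarrow> nat \<Rightarrow> nat \<Rightarrow> (nat \<Rightarrow> nat) \<Rightarrow> ('p \<Rightarrow> int) set" where
  "U_set deg P n m r t j = {D. positive_divisor D \<and> div_deg deg D = int r
      \<and> div_deg deg (div_bar P n m D) = int t
      \<and> (\<forall>l\<in>{1..m}. jcount P n m D l = j l)}"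

(* C_{a,b}: positive divisors of degree a whose bar has support exactly {P_1,...,P_b}
   (a fixed choice of b rational places) *)
definition C_num :: "('p \<Rightarrow> nat) \<Rightarrow> (nat \<Rightarrow> 'p) \<Rightarrow> nat \<Rightarrow> nat \<Rightarrow> nat \<Rightarrow> nat" where
  "C_num deg P n a b = card {D. positive_divisor D \<and> div_deg deg D = int a
      \<and> (\<forall>i\<in>{1..n}. (D (P i) \<ge> 1 \<longleftrightarrow> i \<le> b))}"

end

theory Submission
  imports Defs "HOL-Library.FuncSet" "HOL-Combinatorics.Permutations"
begin

(* Split a positive divisor D into its truncation min(m+1, D) on the rational places, which is
   \overline D there, and its excess: max(0, D - m) on the rational places and D elsewhere.
   This is a bijection onto the compatible pairs, in which the excess is positive at a rational
   place exactly when the truncation is m+1 there.  Once the j_l are fixed, deg \overline D = t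
   says that the truncation equals m+1 at exactly K = t - mn + w places, so the truncations are
   the assignments of levels to the n rational places with prescribed level sizes (a product of
   binomials), and the excesses are the divisors of degree r - mn + w meeting the rational places
   in a given K-set.  Their number is C(r-mn+w, K), since permuting the rational places
   preserves degrees. *)

section \<open>Functions with prescribed fibre sizes\<close>

lemma bij_betw_PiE_insert_fibre:
  assumes "y \<notin> B"
  shows "bij_betw (\<lambda>f. ({x\<in>I. f x = y}, restrict f (I - {x\<in>I. f x = y})))
           (I \<rightarrow>\<^sub>E insert y B) (SIGMA X:Pow I. (I - X) \<rightarrow>\<^sub>E B)"
proof (rule bij_betw_byWitness[where f' = "\<lambda>Xg x. if x \<in> fst Xg then y else snd Xg x"])
  have "{x\<in>I. (if x \<in> X then y else g x) = y} = X" if "X \<subseteq> I" "g \<in> (I - X) \<rightarrow>\<^sub>E B" for X g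
    using that assms by (auto simp: PiE_def Pi_def)
  then show "\<forall>Xg\<in>SIGMA X:Pow I. (I - X) \<rightarrow>\<^sub>E B.
      ({x\<in>I. (if x \<in> fst Xg then y else snd Xg x) = y},
       restrict (\<lambda>x. if x \<in> fst Xg then y else snd Xg x) (I - {x\<in>I. (if x \<in> fst Xg then y else snd Xg x) = y})) = Xg"
    by (auto simp: fun_eq_iff PiE_def extensional_def)
qed (auto simp: fun_eq_iff PiE_def Pi_def extensional_def split: if_splits)

definition funs_with_fibre_sizes :: "'a set \<Rightarrow> 'b \<Rightarrow> (nat \<Rightarrow> 'b) \<Rightarrow> nat \<Rightarrow> (nat \<Rightarrow> nat) \<Rightarrow> ('a \<Rightarrow> 'b) set"
  where "funs_with_fibre_sizes I z val s c =
    {f \<in> I \<rightarrow>\<^sub>E insert z (val ` {..<s}). \<forall>v<s. card {x\<in>I. f x = val v} = c v}"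

lemma card_funs_with_fibre_sizes_Suc:
  assumes "finite I" "inj_on val {..<Suc s}" "z \<notin> val ` {..<Suc s}"
  shows "card (funs_with_fibre_sizes I z val (Suc s) c)
       = (\<Sum>X | X \<subseteq> I \<and> card X = c s. card (funs_with_fibre_sizes (I - X) z val s c))"
proof -
  define B where "B = insert z (val ` {..<s})"
  define detach where "detach = (\<lambda>f. ({x\<in>I. f x = val s}, restrict f (I - {x\<in>I. f x = val s})))"
  have y: "val s \<notin> B" and img: "insert z (val ` {..<Suc s}) = insert (val s) B"
    using assms by (auto simp: B_def lessThan_Suc)
  have fibre: "card {x\<in>I - fst (detach f). snd (detach f) x = val v} = card {x\<in>I. f x = val v}"
    if "v < s" for f v
  proof -
    have "val v \<noteq> val s"
      using assms(2) that by (auto dest: inj_onD)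
    then show ?thesis
      by (auto simp: detach_def intro: arg_cong[where f = card])
  qed
  have "bij_betw detach
      {f \<in> I \<rightarrow>\<^sub>E insert (val s) B. \<forall>v<Suc s. card {x\<in>I. f x = val v} = c v}
      {Xg \<in> SIGMA X:Pow I. (I - X) \<rightarrow>\<^sub>E B.
         card (fst Xg) = c s \<and> (\<forall>v<s. card {x\<in>I - fst Xg. snd Xg x = val v} = c v)}"
  proof (rule bij_betw_Collect[OF bij_betw_PiE_insert_fibre[OF y, where I = I, folded detach_def]])
    show "(card (fst (detach f)) = c s
          \<and> (\<forall>v<s. card {x\<in>I - fst (detach f). snd (detach f) x = val v} = c v))
        \<longleftrightarrow> (\<forall>v<Suc s. card {x\<in>I. f x = val v} = c v)" for f
      using fibre by (auto simp: less_Suc_eq detach_def)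
  qed
  moreover have "{Xg \<in> SIGMA X:Pow I. (I - X) \<rightarrow>\<^sub>E B.
         card (fst Xg) = c s \<and> (\<forall>v<s. card {x\<in>I - fst Xg. snd Xg x = val v} = c v)}
      = (SIGMA X:{X. X \<subseteq> I \<and> card X = c s}. funs_with_fibre_sizes (I - X) z val s c)"
    by (auto simp: funs_with_fibre_sizes_def B_def)
  ultimately have "card (funs_with_fibre_sizes I z val (Suc s) c)
      = card (SIGMA X:{X. X \<subseteq> I \<and> card X = c s}. funs_with_fibre_sizes (I - X) z val s c)"
    by (simp add: funs_with_fibre_sizes_def img bij_betw_same_card)
  also have "\<dots> = (\<Sum>X | X \<subseteq> I \<and> card X = c s. card (funs_with_fibre_sizes (I - X) z val s c))"
  proof (rule card_SigmaI)
    show "finite {X. X \<subseteq> I \<and> card X = c s}"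
      using assms(1) by simp
    show "\<forall>X\<in>{X. X \<subseteq> I \<and> card X = c s}. finite (funs_with_fibre_sizes (I - X) z val s c)"
      unfolding funs_with_fibre_sizes_def
      using assms(1) finite_PiE[of "I - _" "\<lambda>_. insert z (val ` {..<s})"] by auto
  qed
  finally show ?thesis .
qed

lemma card_funs_with_fibre_sizes:
  assumes "finite I" "inj_on val {..<s}" "z \<notin> val ` {..<s}"
  shows "card (funs_with_fibre_sizes I z val s c) = (\<Prod>v<s. (card I - (\<Sum>u\<in>{v<..<s}. c u)) choose c v)"
  using assms
proof (induction s arbitrary: I)
  case 0
  then show ?case
    by (simp add: funs_with_fibre_sizes_def card_PiE)
next
  case (Suc s)
  have "card (funs_with_fibre_sizes I z val (Suc s) c)
      = (\<Sum>X | X \<subseteq> I \<and> card X = c s. card (funs_with_fibre_sizes (I - X) z val s c))"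
    using Suc.prems by (rule card_funs_with_fibre_sizes_Suc)
  also have "\<dots> = (\<Sum>X | X \<subseteq> I \<and> card X = c s. \<Prod>v<s. (card I - c s - (\<Sum>u\<in>{v<..<s}. c u)) choose c v)"
  proof (rule sum.cong)
    fix X assume "X \<in> {X. X \<subseteq> I \<and> card X = c s}"
    then have "card (I - X) = card I - c s"
      using Suc.prems(1) by (auto simp: card_Diff_subset finite_subset)
    then show "card (funs_with_fibre_sizes (I - X) z val s c)
        = (\<Prod>v<s. (card I - c s - (\<Sum>u\<in>{v<..<s}. c u)) choose c v)"
      using Suc.IH[of "I - X"] Suc.prems by (simp add: inj_on_subset lessThan_Suc)
  qed simp
  also have "\<dots> = (card I choose c s) * (\<Prod>v<s. (card I - c s - (\<Sum>u\<in>{v<..<s}. c u)) choose c v)"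
    using n_subsets[OF Suc.prems(1)] by simp
  also have "\<dots> = (\<Prod>v<Suc s. (card I - (\<Sum>u\<in>{v<..<Suc s}. c u)) choose c v)"
  proof -
    have "{v<..<Suc s} = insert s {v<..<s}" if "v < s" for v
      using that by auto
    moreover have "{s<..<Suc s} = {}"
      by auto
    ultimately show ?thesis
      by (simp add: diff_diff_add add.commute)
  qed
  finally show ?case .
qed

section \<open>Degrees of positive divisors\<close>

lemma div_deg_eq_sum_superset:
  assumes "finite A" "{p. D p \<noteq> 0} \<subseteq> A"
  shows "div_deg deg D = (\<Sum>p\<in>A. D p * int (deg p))"
  unfolding div_deg_def using assms by (intro sum.mono_neutral_left) auto

lemma div_deg_eq_plus_sum_diff:
  assumes "finite {p. D p \<noteq> 0}" "finite {p. E p \<noteq> 0}" "finite R"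
    and "\<forall>p\<in>R. deg p = 1" "\<forall>p. p \<notin> R \<longrightarrow> D p = E p"
  shows "div_deg deg D = div_deg deg E + (\<Sum>p\<in>R. D p - E p)"
proof -
  let ?A = "{p. D p \<noteq> 0} \<union> {p. E p \<noteq> 0} \<union> R"
  have "div_deg deg D = (\<Sum>p\<in>?A. D p * int (deg p))" "div_deg deg E = (\<Sum>p\<in>?A. E p * int (deg p))"
    using assms(1-3) by (auto intro!: div_deg_eq_sum_superset)
  then have "div_deg deg D - div_deg deg E = (\<Sum>p\<in>?A. (D p - E p) * int (deg p))"
    by (simp add: sum_subtractf left_diff_distrib)
  also have "\<dots> = (\<Sum>p\<in>R. (D p - E p) * int (deg p))"
    using assms(1-3,5) by (intro sum.mono_neutral_right) auto
  also have "\<dots> = (\<Sum>p\<in>R. D p - E p)"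
    using assms(4) by simp
  finally show ?thesis
    by simp
qed

lemma finite_positive_divisors_of_degree:
  assumes "\<forall>p. 1 \<le> deg p" "\<forall>d. finite {p. deg p = d}"
  shows "finite {D. positive_divisor D \<and> div_deg deg D = int a}"
proof -
  let ?Q = "{p. deg p \<le> a}"
  have "?Q = (\<Union>d\<le>a. {p. deg p = d})"
    by auto
  then have "finite ?Q"
    using assms(2) by simp
  moreover have "D \<in> {D. \<forall>p. (p \<in> ?Q \<longrightarrow> D p \<in> {0..int a}) \<and> (p \<notin> ?Q \<longrightarrow> D p = 0)}"
    if D: "positive_divisor D" "div_deg deg D = int a" for D
  proof -
    have nonneg: "0 \<le> D p" for p
      using D(1) by (simp add: positive_divisor_def)
    have bound: "D p \<le> int a \<and> deg p \<le> a" if "D p \<noteq> 0" for p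
    proof -
      have "D p * int (deg p) \<le> (\<Sum>q | D q \<noteq> 0. D q * int (deg q))"
        using D(1) that by (intro member_le_sum) (auto simp: positive_divisor_def)
      then have "D p * int (deg p) \<le> int a"
        using D(2) by (simp add: div_deg_def)
      moreover have "1 \<le> D p" "1 \<le> int (deg p)"
        using nonneg[of p] that assms(1) by auto
      then have "D p \<le> D p * int (deg p)" "int (deg p) \<le> D p * int (deg p)"
        by (simp_all add: mult_le_cancel_left1 mult_le_cancel_right1)
      ultimately show ?thesis
        by linarith
    qed
    show ?thesis
    proof (intro CollectI allI conjI impI)
      fix p
      show "D p \<in> {0..int a}"
        using nonneg[of p] bound[of p] by (cases "D p = 0") auto
      show "D p = 0" if "p \<notin> ?Q"
        using bound[of p] that by auto
    qed
  qed
  ultimately show ?thesis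
    by (intro finite_subset[OF _ finite_set_of_finite_funs[where B = "{0..int a}"]]) auto
qed

lemma positive_divisor_comp_bij:
  assumes "bij \<pi>" "positive_divisor D"
  shows "positive_divisor (D \<circ> \<pi>)"
proof -
  have "finite (\<pi> -` {p. D p \<noteq> 0})"
    using assms by (intro finite_vimageI) (auto simp: positive_divisor_def bij_def)
  then show ?thesis
    using assms(2) by (simp add: positive_divisor_def vimage_def)
qed

lemma div_deg_comp_bij:
  assumes "bij \<pi>" "\<forall>p. deg (\<pi> p) = deg p"
  shows "div_deg deg (D \<circ> \<pi>) = div_deg deg D"
proof -
  have "bij_betw \<pi> (\<pi> -` {p. D p \<noteq> 0}) {p. D p \<noteq> 0}"
    using assms(1) by (rule bij_betw_subset) (use bij_is_surj[OF assms(1)] in auto)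
  then have "(\<Sum>p\<in>\<pi> -` {p. D p \<noteq> 0}. D (\<pi> p) * int (deg (\<pi> p))) = div_deg deg D"
    unfolding div_deg_def by (rule sum.reindex_bij_betw)
  then show ?thesis
    using assms(2) by (simp add: div_deg_def vimage_def)
qed

lemma exists_permutes_image:
  assumes "finite R" "S \<subseteq> R" "S' \<subseteq> R" "card S = card S'"
  obtains \<pi> where "\<pi> permutes R" "\<pi> ` S = S'"
proof -
  obtain g1 where g1: "bij_betw g1 S S'"
    using assms finite_same_card_bij finite_subset by metis
  have "card (R - S) = card (R - S')"
    using assms by (simp add: card_Diff_subset finite_subset)
  then obtain g2 where g2: "bij_betw g2 (R - S) (R - S')"
    using assms(1) finite_same_card_bij by blast
  define \<pi> where "\<pi> x = (if x \<in> S then g1 x else if x \<in> R then g2 x else x)" for x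
  have "bij_betw \<pi> (S \<union> (R - S)) (S' \<union> (R - S'))"
    unfolding \<pi>_def by (rule bij_betw_disjoint_Un) (use g1 g2 in \<open>auto simp: bij_betw_def inj_on_def\<close>)
  then have "\<pi> permutes R"
    using assms(2,3) by (intro bij_imp_permutes) (auto simp: Un_absorb1 \<pi>_def)
  moreover have "\<pi> ` S = S'"
    using g1 by (auto simp: \<pi>_def bij_betw_def)
  ultimately show ?thesis
    using that by blast
qed

definition divisors_with_support :: "('p \<Rightarrow> nat) \<Rightarrow> nat \<Rightarrow> 'p set \<Rightarrow> 'p set \<Rightarrow> ('p \<Rightarrow> int) set" where
  "divisors_with_support deg a R S =
     {D. positive_divisor D \<and> div_deg deg D = int a \<and> (\<forall>p\<in>R. 1 \<le> D p \<longleftrightarrow> p \<in> S)}"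

lemma divisors_with_support_comp_permutes:
  assumes "\<pi> permutes R" "\<forall>p\<in>R. deg p = d" "D \<in> divisors_with_support deg a R (\<pi> ` S)"
  shows "D \<circ> \<pi> \<in> divisors_with_support deg a R S"
proof -
  have "deg (\<pi> p) = deg p" for p
    using assms(1,2) by (cases "p \<in> R") (auto simp: permutes_in_image permutes_not_in)
  moreover have "p \<in> R \<Longrightarrow> \<pi> p \<in> \<pi> ` S \<longleftrightarrow> p \<in> S" for p
    using permutes_inj[OF assms(1)] by (auto dest: injD)
  ultimately show ?thesis
    using assms permutes_bij[OF assms(1)]
    by (auto simp: divisors_with_support_def positive_divisor_comp_bij div_deg_comp_bij permutes_in_image)
qed

lemma card_divisors_with_support_cong:
  assumes "finite R" "\<forall>p\<in>R. deg p = d" "S \<subseteq> R" "S' \<subseteq> R" "card S = card S'"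
  shows "card (divisors_with_support deg a R S) = card (divisors_with_support deg a R S')"
proof -
  obtain \<pi> where \<pi>: "\<pi> permutes R" "\<pi> ` S = S'"
    using exists_permutes_image[OF assms(1,3-5)] .
  have "inv \<pi> ` S' = S"
    by (simp flip: \<pi>(2) add: image_inv_f_f permutes_inj[OF \<pi>(1)])
  have "bij_betw (\<lambda>D. D \<circ> \<pi>) (divisors_with_support deg a R S') (divisors_with_support deg a R S)"
  proof (rule bij_betw_byWitness[where f' = "\<lambda>D. D \<circ> inv \<pi>"])
    show "\<forall>D\<in>divisors_with_support deg a R S'. D \<circ> \<pi> \<circ> inv \<pi> = D"
      "\<forall>D\<in>divisors_with_support deg a R S. D \<circ> inv \<pi> \<circ> \<pi> = D"
      using permutes_inverses[OF \<pi>(1)] by (auto simp: fun_eq_iff)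
    show "(\<lambda>D. D \<circ> \<pi>) ` divisors_with_support deg a R S' \<subseteq> divisors_with_support deg a R S"
      using divisors_with_support_comp_permutes[OF \<pi>(1) assms(2)] \<pi>(2) by blast
    show "(\<lambda>D. D \<circ> inv \<pi>) ` divisors_with_support deg a R S \<subseteq> divisors_with_support deg a R S'"
      using divisors_with_support_comp_permutes[OF permutes_inv[OF \<pi>(1)] assms(2)]
        \<open>inv \<pi> ` S' = S\<close> by blast
  qed
  then show ?thesis
    by (simp add: bij_betw_same_card)
qed

section \<open>Truncation and excess at the rational places\<close>

definition trunc_on :: "'p set \<Rightarrow> nat \<Rightarrow> ('p \<Rightarrow> int) \<Rightarrow> 'p \<Rightarrow> int" where
  "trunc_on R m D = restrict (\<lambda>p. min (int m + 1) (D p)) R"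

definition excess_on :: "'p set \<Rightarrow> nat \<Rightarrow> ('p \<Rightarrow> int) \<Rightarrow> 'p \<Rightarrow> int" where
  "excess_on R m D p = (if p \<in> R then max 0 (D p - int m) else D p)"

definition glue_on :: "'p set \<Rightarrow> nat \<Rightarrow> ('p \<Rightarrow> int) \<Rightarrow> ('p \<Rightarrow> int) \<Rightarrow> 'p \<Rightarrow> int" where
  "glue_on R m g E p = (if p \<in> R then (if g p = int m + 1 then int m + E p else g p) else E p)"

lemma positive_divisor_excess_on:
  assumes "positive_divisor D"
  shows "positive_divisor (excess_on R m D)"
proof -
  have "{p. excess_on R m D p \<noteq> 0} \<subseteq> {p. D p \<noteq> 0}"
    by (auto simp: excess_on_def)
  then have "finite {p. excess_on R m D p \<noteq> 0}"
    by (rule finite_subset) (use assms in \<open>simp add: positive_divisor_def\<close>)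
  then show ?thesis
    using assms by (simp add: positive_divisor_def excess_on_def)
qed

lemma positive_divisor_glue_on:
  assumes "finite R" "positive_divisor E" "\<forall>p\<in>R. 0 \<le> g p"
  shows "positive_divisor (glue_on R m g E)"
proof -
  have "{p. glue_on R m g E p \<noteq> 0} \<subseteq> {p. E p \<noteq> 0} \<union> R"
    by (auto simp: glue_on_def)
  then have "finite {p. glue_on R m g E p \<noteq> 0}"
    by (rule finite_subset) (use assms in \<open>simp add: positive_divisor_def\<close>)
  then show ?thesis
    using assms by (simp add: positive_divisor_def glue_on_def)
qed

definition compatible_pairs :: "'p set \<Rightarrow> nat \<Rightarrow> (('p \<Rightarrow> int) \<times> ('p \<Rightarrow> int)) set" where
  "compatible_pairs R m = {(g, E). g \<in> R \<rightarrow>\<^sub>E {0..int m + 1} \<and> positive_divisor E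
     \<and> (\<forall>p\<in>R. 1 \<le> E p \<longleftrightarrow> g p = int m + 1)}"

lemma trunc_excess_glue_on:
  assumes "(g, E) \<in> compatible_pairs R m"
  shows "trunc_on R m (glue_on R m g E) = g" "excess_on R m (glue_on R m g E) = E"
proof -
  from assms have g: "g \<in> R \<rightarrow>\<^sub>E {0..int m + 1}"
    and E: "positive_divisor E" "\<forall>p\<in>R. 1 \<le> E p \<longleftrightarrow> g p = int m + 1"
    by (auto simp: compatible_pairs_def)
  have "min (int m + 1) (glue_on R m g E p) = g p \<and> max 0 (glue_on R m g E p - int m) = E p"
    if "p \<in> R" for p
  proof (cases "g p = int m + 1")
    case True
    then show ?thesis
      using E(2) that by (auto simp: glue_on_def)
  next
    case False
    then have "g p \<le> int m"
      using g that by (auto simp: PiE_iff)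
    have "\<not> 1 \<le> E p" "0 \<le> E p"
      using E that False by (auto simp: positive_divisor_def)
    then have "E p = 0"
      by linarith
    with \<open>g p \<le> int m\<close> show ?thesis
      using False that by (auto simp: glue_on_def)
  qed
  then show "trunc_on R m (glue_on R m g E) = g" "excess_on R m (glue_on R m g E) = E"
    using g by (auto simp: fun_eq_iff trunc_on_def excess_on_def glue_on_def PiE_iff extensional_def)
qed

lemma bij_betw_trunc_excess:
  assumes "finite R"
  shows "bij_betw (\<lambda>D. (trunc_on R m D, excess_on R m D)) {D. positive_divisor D} (compatible_pairs R m)"
proof (rule bij_betw_byWitness[where f' = "case_prod (glue_on R m)"])
  show "\<forall>D\<in>{D. positive_divisor D}. case_prod (glue_on R m) (trunc_on R m D, excess_on R m D) = D"
    by (auto simp: fun_eq_iff glue_on_def trunc_on_def excess_on_def positive_divisor_def)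
  show "\<forall>gE\<in>compatible_pairs R m.
      (trunc_on R m (case_prod (glue_on R m) gE), excess_on R m (case_prod (glue_on R m) gE)) = gE"
    by (auto simp: trunc_excess_glue_on)
  show "(\<lambda>D. (trunc_on R m D, excess_on R m D)) ` {D. positive_divisor D} \<subseteq> compatible_pairs R m"
    by (auto simp: compatible_pairs_def positive_divisor_excess_on)
      (auto simp: trunc_on_def excess_on_def positive_divisor_def)
  show "case_prod (glue_on R m) ` compatible_pairs R m \<subseteq> {D. positive_divisor D}"
    using assms by (auto simp: compatible_pairs_def intro!: positive_divisor_glue_on)
qed

lemma div_deg_eq_excess_plus_trunc:
  assumes "finite R" "\<forall>p\<in>R. deg p = 1" "positive_divisor D"
  shows "div_deg deg D = div_deg deg (excess_on R m D) + (\<Sum>p\<in>R. trunc_on R m D p)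
           - int (card {p\<in>R. trunc_on R m D p = int m + 1})"
proof -
  have "(\<Sum>p\<in>R. D p - excess_on R m D p)
      = (\<Sum>p\<in>R. trunc_on R m D p - (if trunc_on R m D p = int m + 1 then 1 else 0))"
    using assms(3) by (intro sum.cong) (auto simp: trunc_on_def excess_on_def positive_divisor_def)
  also have "\<dots> = (\<Sum>p\<in>R. trunc_on R m D p) - int (card {p\<in>R. trunc_on R m D p = int m + 1})"
    using assms(1) by (simp add: sum_subtractf sum.inter_filter[symmetric])
  finally have "(\<Sum>p\<in>R. D p - excess_on R m D p)
      = (\<Sum>p\<in>R. trunc_on R m D p) - int (card {p\<in>R. trunc_on R m D p = int m + 1})" .
  moreover have "div_deg deg D = div_deg deg (excess_on R m D) + (\<Sum>p\<in>R. D p - excess_on R m D p)"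
    using assms positive_divisor_excess_on[OF assms(3)]
    by (intro div_deg_eq_plus_sum_diff) (auto simp: positive_divisor_def excess_on_def)
  ultimately show ?thesis
    by simp
qed

lemma level_decomposition:
  assumes "x \<in> {0..int m + 1}"
  shows "x = int m + (if x = int m + 1 then 1 else 0) - (\<Sum>l=1..m. if x = int m - int l then int l else 0)"
proof (cases "x < int m")
  case True
  have "(\<Sum>l=1..m. if x = int m - int l then int l else 0) = (\<Sum>l=1..m. if l = nat (int m - x) then int l else 0)"
    using True by (intro sum.cong) auto
  also have "\<dots> = int m - x"
    using True assms by (simp add: le_nat_iff nat_le_iff)
  finally show ?thesis
    using True by simp
next
  case False
  then have "(\<Sum>l=1..m. if x = int m - int l then int l else 0) = 0"
    by (intro sum.neutral) auto
  then show ?thesis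
    using False assms by auto
qed

lemma sum_eq_by_level_counts:
  assumes "finite R" "g \<in> R \<rightarrow> {0..int m + 1}"
  shows "(\<Sum>p\<in>R. g p) = int m * int (card R) + int (card {p\<in>R. g p = int m + 1})
           - (\<Sum>l=1..m. int l * int (card {p\<in>R. g p = int m - int l}))"
proof -
  have "(\<Sum>p\<in>R. g p) = (\<Sum>p\<in>R. int m + (if g p = int m + 1 then 1 else 0)
                          - (\<Sum>l=1..m. if g p = int m - int l then int l else 0))"
    by (rule sum.cong[OF refl level_decomposition]) (use assms(2) in auto)
  also have "\<dots> = int m * int (card R) + (\<Sum>p\<in>R. if g p = int m + 1 then 1 else 0)
                   - (\<Sum>l=1..m. \<Sum>p\<in>R. if g p = int m - int l then int l else 0)"
    by (simp add: sum.distrib sum_subtractf sum.swap[of _ R])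
  finally show ?thesis
    using assms(1) by (simp add: sum.inter_filter[symmetric] mult.commute)
qed

section \<open>Counting divisors by levels\<close>

definition level_profiles :: "'p set \<Rightarrow> nat \<Rightarrow> nat \<Rightarrow> (nat \<Rightarrow> nat) \<Rightarrow> ('p \<Rightarrow> int) set" where
  "level_profiles R m K j = {g \<in> R \<rightarrow>\<^sub>E {0..int m + 1}. card {p\<in>R. g p = int m + 1} = K
     \<and> (\<forall>l\<in>{1..m}. card {p\<in>R. g p = int m - int l} = j l)}"

(* Level m is left unconstrained; index 0 stands for level m + 1 and index l > 0 for level m - l. *)
definition level_of_index :: "nat \<Rightarrow> nat \<Rightarrow> int" where
  "level_of_index m v = (if v = 0 then int m + 1 else int m - int v)"

lemma insert_level_of_index:
  "insert (int m) (level_of_index m ` {..<Suc m}) = {0..int m + 1}"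
proof (intro equalityI subsetI)
  show "x \<in> {0..int m + 1}" if "x \<in> insert (int m) (level_of_index m ` {..<Suc m})" for x
    using that by (auto simp: level_of_index_def)
next
  fix x assume x: "x \<in> {0..int m + 1}"
  have "x \<in> level_of_index m ` {..<Suc m}" if "x < int m"
    using x that by (intro image_eqI[where x = "nat (int m - x)"]) (auto simp: level_of_index_def)
  moreover have "x \<in> level_of_index m ` {..<Suc m}" if "x = int m + 1"
    using that by (intro image_eqI[where x = 0]) (auto simp: level_of_index_def)
  moreover have "x < int m \<or> x = int m \<or> x = int m + 1"
    using x by auto
  ultimately show "x \<in> insert (int m) (level_of_index m ` {..<Suc m})"
    by blast
qed

lemma level_profiles_eq_funs_with_fibre_sizes:
  "level_profiles R m K j = funs_with_fibre_sizes R (int m) (level_of_index m) (Suc m) (j(0 := K))"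
proof -
  have "(\<forall>v<Suc m. card {p\<in>R. g p = level_of_index m v} = (j(0 := K)) v)
      \<longleftrightarrow> card {p\<in>R. g p = int m + 1} = K \<and> (\<forall>l\<in>{1..m}. card {p\<in>R. g p = int m - int l} = j l)" for g
  proof -
    have "v < Suc m \<longleftrightarrow> v \<in> insert 0 {1..m}" for v
      by auto
    then have "(\<forall>v<Suc m. card {p\<in>R. g p = level_of_index m v} = (j(0 := K)) v)
        \<longleftrightarrow> (\<forall>v\<in>insert 0 {1..m}. card {p\<in>R. g p = level_of_index m v} = (j(0 := K)) v)"
      by blast
    then show ?thesis
      by (simp add: level_of_index_def)
  qed
  then show ?thesis
    by (simp add: level_profiles_def funs_with_fibre_sizes_def insert_level_of_index)
qed

lemma card_level_profiles:
  assumes "finite R"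
  shows "card (level_profiles R m K j)
       = (\<Prod>l=1..m. (card R - (\<Sum>k=l+1..m. j k)) choose j l) * ((card R - (\<Sum>k=1..m. j k)) choose K)"
proof -
  define c where "c = j(0 := K)"
  have "inj_on (level_of_index m) {..<Suc m}" "int m \<notin> level_of_index m ` {..<Suc m}"
    by (auto simp: inj_on_def level_of_index_def split: if_splits)
  then have "card (level_profiles R m K j) = (\<Prod>v<Suc m. (card R - (\<Sum>u\<in>{v<..<Suc m}. c u)) choose c v)"
    unfolding level_profiles_eq_funs_with_fibre_sizes c_def by (rule card_funs_with_fibre_sizes[OF assms])
  also have "\<dots> = (\<Prod>v\<in>insert 0 {1..m}. (card R - (\<Sum>u\<in>{v<..<Suc m}. c u)) choose c v)"
    by (rule prod.cong) auto
  also have "\<dots> = ((card R - (\<Sum>k=1..m. j k)) choose K) * (\<Prod>l=1..m. (card R - (\<Sum>k=l+1..m. j k)) choose j l)"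
  proof -
    have "{v<..<Suc m} = {v+1..m}" for v
      by auto
    moreover have "sum c {v+1..m} = sum j {v+1..m}" for v
      by (simp add: c_def)
    ultimately show ?thesis
      by (simp add: c_def)
  qed
  finally show ?thesis
    by simp
qed

definition divisors_by_levels :: "('p \<Rightarrow> nat) \<Rightarrow> 'p set \<Rightarrow> nat \<Rightarrow> nat \<Rightarrow> nat \<Rightarrow> (nat \<Rightarrow> nat) \<Rightarrow> ('p \<Rightarrow> int) set" where
  "divisors_by_levels deg R m r t j = {D. positive_divisor D \<and> div_deg deg D = int r
     \<and> (\<Sum>p\<in>R. min (int m + 1) (D p)) = int t \<and> (\<forall>l\<in>{1..m}. card {p\<in>R. D p = int m - int l} = j l)}"

lemma divisors_by_levels_iff_trunc_excess:
  assumes "finite R" "\<forall>p\<in>R. deg p = 1" "positive_divisor D"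
    and K: "int K = int t + (\<Sum>l=1..m. int l * int (j l)) - int m * int (card R)"
    and a: "int a = int r - int t + int K"
  shows "D \<in> divisors_by_levels deg R m r t j \<longleftrightarrow> trunc_on R m D \<in> level_profiles R m K j
           \<and> excess_on R m D \<in> divisors_with_support deg a R {p\<in>R. trunc_on R m D p = int m + 1}"
proof -
  define g where "g = trunc_on R m D"
  define E where "E = excess_on R m D"
  define J where "J = (\<forall>l\<in>{1..m}. card {p\<in>R. g p = int m - int l} = j l)"
  have "(g, E) \<in> compatible_pairs R m"
    using bij_betwE[OF bij_betw_trunc_excess[OF assms(1)]] assms(3) by (simp add: g_def E_def)
  then have g: "g \<in> R \<rightarrow>\<^sub>E {0..int m + 1}"
    and E: "positive_divisor E" "\<forall>p\<in>R. 1 \<le> E p \<longleftrightarrow> g p = int m + 1"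
    by (auto simp: compatible_pairs_def)
  have "{p\<in>R. D p = int m - int l} = {p\<in>R. g p = int m - int l}" if "1 \<le> l" for l
    using that by (auto simp: g_def trunc_on_def)
  then have "D \<in> divisors_by_levels deg R m r t j \<longleftrightarrow> div_deg deg D = int r \<and> (\<Sum>p\<in>R. g p) = int t \<and> J"
    using assms(3) by (auto simp: divisors_by_levels_def J_def g_def trunc_on_def)
  moreover have "g \<in> level_profiles R m K j \<and> E \<in> divisors_with_support deg a R {p\<in>R. g p = int m + 1}
      \<longleftrightarrow> card {p\<in>R. g p = int m + 1} = K \<and> J \<and> div_deg deg E = int a"
    using g E by (auto simp: level_profiles_def divisors_with_support_def J_def)
  moreover have "div_deg deg D = div_deg deg E + (\<Sum>p\<in>R. g p) - int (card {p\<in>R. g p = int m + 1})"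
    using div_deg_eq_excess_plus_trunc[OF assms(1-3)] by (simp add: g_def E_def)
  moreover have "(\<Sum>p\<in>R. g p) = int m * int (card R) + int (card {p\<in>R. g p = int m + 1})
      - (\<Sum>l=1..m. int l * int (j l))" if J
  proof -
    have "g \<in> R \<rightarrow> {0..int m + 1}"
      using g by (simp add: PiE_iff)
    with \<open>J\<close> show ?thesis
      using sum_eq_by_level_counts[OF assms(1)] by (simp add: J_def)
  qed
  ultimately show ?thesis
    using K a by (auto simp: g_def E_def)
qed

lemma card_divisors_by_levels:
  assumes "finite R" "\<forall>p\<in>R. deg p = 1" "\<forall>p. 1 \<le> deg p" "\<forall>d. finite {p. deg p = d}"
    and "S \<subseteq> R" "card S = K"
    and K: "int K = int t + (\<Sum>l=1..m. int l * int (j l)) - int m * int (card R)"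
    and a: "int a = int r - int t + int K"
  shows "card (divisors_by_levels deg R m r t j)
           = card (level_profiles R m K j) * card (divisors_with_support deg a R S)"
proof -
  define G where "G g = divisors_with_support deg a R {p\<in>R. g p = int m + 1}" for g
  have "bij_betw (\<lambda>D. (trunc_on R m D, excess_on R m D))
      {D \<in> {D. positive_divisor D}. D \<in> divisors_by_levels deg R m r t j}
      {gE \<in> compatible_pairs R m. gE \<in> (SIGMA g:level_profiles R m K j. G g)}"
    using divisors_by_levels_iff_trunc_excess[OF assms(1,2) _ K a]
    by (intro bij_betw_Collect[OF bij_betw_trunc_excess[OF assms(1)]]) (simp add: G_def)
  moreover have "{D \<in> {D. positive_divisor D}. D \<in> divisors_by_levels deg R m r t j}
      = divisors_by_levels deg R m r t j"
    by (auto simp: divisors_by_levels_def)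
  moreover have "{gE \<in> compatible_pairs R m. gE \<in> (SIGMA g:level_profiles R m K j. G g)}
      = (SIGMA g:level_profiles R m K j. G g)"
    by (auto simp: compatible_pairs_def G_def level_profiles_def divisors_with_support_def)
  ultimately have "card (divisors_by_levels deg R m r t j) = card (SIGMA g:level_profiles R m K j. G g)"
    by (simp add: bij_betw_same_card)
  also have "\<dots> = (\<Sum>g\<in>level_profiles R m K j. card (G g))"
  proof (rule card_SigmaI)
    show "finite (level_profiles R m K j)"
      using assms(1) unfolding level_profiles_def
      by (intro finite_subset[OF _ finite_PiE[of R "\<lambda>_. {0..int m + 1}"]]) auto
    show "\<forall>g\<in>level_profiles R m K j. finite (G g)"
      unfolding G_def divisors_with_support_def
      by (intro ballI finite_subset[OF _ finite_positive_divisors_of_degree[OF assms(3,4), of a]]) auto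
  qed
  also have "\<dots> = (\<Sum>g\<in>level_profiles R m K j. card (divisors_with_support deg a R S))"
    unfolding G_def using assms(1,2,5,6)
    by (intro sum.cong refl card_divisors_with_support_cong) (auto simp: level_profiles_def)
  finally show ?thesis
    by simp
qed

lemma div_deg_div_bar:
  assumes "\<forall>p\<in>P ` {1..n}. deg p = 1"
  shows "div_deg deg (div_bar P n m D) = (\<Sum>p\<in>P ` {1..n}. min (int m + 1) (D p))"
proof -
  have "{p. div_bar P n m D p \<noteq> 0} \<subseteq> P ` {1..n}"
    by (auto simp: div_bar_def)
  then have "div_deg deg (div_bar P n m D) = div_deg deg (\<lambda>_. 0) + (\<Sum>p\<in>P ` {1..n}. div_bar P n m D p - 0)"
    using assms by (intro div_deg_eq_plus_sum_diff) (auto simp: div_bar_def intro: finite_subset)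
  then show ?thesis
    by (simp add: div_deg_def div_bar_def)
qed

lemma jcount_eq_card_places:
  assumes "inj_on P {1..n}"
  shows "jcount P n m D l = card {p\<in>P ` {1..n}. D p = int m - int l}"
proof -
  have "{p\<in>P ` {1..n}. D p = int m - int l} = P ` {i\<in>{1..n}. D (P i) = int m - int l}"
    by auto
  moreover have "inj_on P {i\<in>{1..n}. D (P i) = int m - int l}"
    using assms by (rule inj_on_subset) auto
  ultimately show ?thesis
    by (simp add: jcount_def card_image)
qed

lemma U_set_eq_divisors_by_levels:
  assumes "inj_on P {1..n}" "\<forall>p\<in>P ` {1..n}. deg p = 1"
  shows "U_set deg P n m r t j = divisors_by_levels deg (P ` {1..n}) m r t j"
  using assms by (simp add: U_set_def divisors_by_levels_def div_deg_div_bar jcount_eq_card_places)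

lemma C_num_eq_card_divisors_with_support:
  assumes "inj_on P {1..n}" "b \<le> n"
  shows "C_num deg P n a b = card (divisors_with_support deg a (P ` {1..n}) (P ` {1..b}))"
proof -
  have "P i \<in> P ` {1..b} \<longleftrightarrow> i \<le> b" if "i \<in> {1..n}" for i
    using inj_on_image_mem_iff[OF assms(1) that, of "{1..b}"] assms(2) that by auto
  then show ?thesis
    by (auto simp: C_num_def divisors_with_support_def intro!: arg_cong[where f = card])
qed

theorem lemma3p5:
  fixes deg :: "'p \<Rightarrow> nat" and P :: "nat \<Rightarrow> 'p" and n m r t :: nat and j :: "nat \<Rightarrow> nat"
  assumes places_inj: "inj_on P {1..n}"
    and deg_pos: "\<forall>p. deg p \<ge> 1"
    and rational: "{p. deg p = 1} = P ` {1..n}"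
    and fin_deg: "\<forall>d. finite {p. deg p = d}"
    and m_pos: "m \<ge> 1"
    and rt: "t \<le> r"
    and lower: "m * n \<le> t + (\<Sum>l=1..m. l * j l)"
    and upper: "t + (\<Sum>l=1..m. (l + 1) * j l) \<le> (m + 1) * n"
  shows "card (U_set deg P n m r t j) =
    (\<Prod>l=1..m. ((n - (\<Sum>k=l+1..m. j k)) choose (j l)))
    * ((n - (\<Sum>k=1..m. j k)) choose ((t + (\<Sum>l=1..m. l * j l)) - m * n))
    * C_num deg P n (r + (\<Sum>l=1..m. l * j l) - m * n) (t + (\<Sum>l=1..m. l * j l) - m * n)"
proof -
  define w where "w = (\<Sum>l=1..m. l * j l)"
  define K where "K = t + w - m * n"
  define a where "a = r + w - m * n"
  define R where "R = P ` {1..n}"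
  have deg1: "\<forall>p\<in>R. deg p = 1"
    using rational by (auto simp: R_def)
  have card_R: "card R = n"
    using places_inj by (simp add: R_def card_image)
  have "(\<Sum>l=1..m. (l + 1) * j l) = w + (\<Sum>l=1..m. j l)"
    by (simp add: w_def sum.distrib)
  then have "K \<le> n"
    using upper by (simp add: K_def)
  then have "card (P ` {1..K}) = K"
    using places_inj by (simp add: card_image inj_on_subset)
  moreover have "int K = int t + (\<Sum>l=1..m. int l * int (j l)) - int m * int (card R)"
    using lower by (simp add: K_def w_def card_R of_nat_diff flip: of_nat_mult of_nat_sum)
  moreover have "int a = int r - int t + int K"
    using lower rt by (simp add: K_def a_def w_def of_nat_diff)
  ultimately have "card (divisors_by_levels deg R m r t j)
      = card (level_profiles R m K j) * card (divisors_with_support deg a R (P ` {1..K}))"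
    using deg_pos fin_deg deg1 \<open>K \<le> n\<close> by (intro card_divisors_by_levels) (auto simp: R_def)
  then show ?thesis
    using U_set_eq_divisors_by_levels[OF places_inj, of deg m r t j] card_level_profiles[of R m K j]
      C_num_eq_card_divisors_with_support[OF places_inj \<open>K \<le> n\<close>] deg1 card_R
    by (simp add: R_def K_def a_def w_def)
qed

end
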